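(* Let $H=\sum_{i,j=1}^n\left(\tfrac12\mu_{ij}p_ip_j+\tfrac12\kappa_{ij}q_iq_j+\tfrac12\gamma_{ij}p_iq_j+\tfrac12\gamma_{ji}q_ip_j\right)$ with $\mu,\kappa$ real symmetric, $\gamma$ real, and $[p_i,q_j]=-i\delta_{ij}$, $[p_i,p_j]=[q_i,q_j]=0$ ($p_i,q_i$ Hermitian). If $H$ is Dirac diagonalizable and $H=\sum_{i=1}^n\omega_id_i^\dagger d_i+C=\sum_{i=1}^n\omega_i'd_i'^\dagger d_i'+C'$ are two diagonalized forms, then the multisets $\{\omega_1,\dots,\omega_n\}$ and $\{\omega_1',\dots,\omega_n'\}$ coincide; i.e., the diagonalized form is unique up to a permutation of the quadratic terms.
   Context: A diagonalized (Dirac) form of $H$ is an expression $H=\sum_i\omega_id_i^\dagger d_i+C$ with $\omega_i,C$ real, where $d_1,\dots,d_n$ are complex linear combinations of $p_1,\dots,p_n,q_1,\dots,q_n$ satisfying $[d_i,d_j^\dagger]=\delta_{ij}$, $[d_i,d_j]=0$. $H$ is Dirac diagonalizable if such a form exists. *)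

theory Defs
  imports Complex_Main "HOL-Library.Multiset"
begin

text \<open>Abstract setting: the operators live in a (nontrivial) unital ring 'a which is a
complex *-algebra: complex scalars act through a central unital ring homomorphism sc,
and star is the adjoint (an anti-multiplicative, conjugate-linear involution).\<close>

definition comm :: "'a::ring \<Rightarrow> 'a \<Rightarrow> 'a" where
  "comm x y = x * y - y * x"

definition star_algebra :: "(complex \<Rightarrow> 'a::ring_1) \<Rightarrow> ('a \<Rightarrow> 'a) \<Rightarrow> bool" where
  "star_algebra sc star \<longleftrightarrow>
     (1::'a) \<noteq> 0 \<and>
     (\<forall>a b. sc (a + b) = sc a + sc b) \<and>
     (\<forall>a b. sc (a * b) = sc a * sc b) \<and>
     sc 1 = 1 \<and>
     (\<forall>a x. sc a * x = x * sc a) \<and>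
     (\<forall>x y. star (x + y) = star x + star y) \<and>
     (\<forall>x y. star (x * y) = star y * star x) \<and>
     (\<forall>a. star (sc a) = sc (cnj a)) \<and>
     (\<forall>x. star (star x) = x)"

definition ccr :: "(complex \<Rightarrow> 'a::ring_1) \<Rightarrow> ('a \<Rightarrow> 'a) \<Rightarrow> ('n \<Rightarrow> 'a) \<Rightarrow> ('n \<Rightarrow> 'a) \<Rightarrow> bool" where
  "ccr sc star p q \<longleftrightarrow>
     (\<forall>i. star (p i) = p i \<and> star (q i) = q i) \<and>
     (\<forall>i j. comm (p i) (q j) = (if i = j then sc (- \<i>) else 0)) \<and>
     (\<forall>i j. comm (p i) (p j) = 0) \<and>
     (\<forall>i j. comm (q i) (q j) = 0)"

definition quad_ham :: "(complex \<Rightarrow> 'a::ring_1) \<Rightarrow> ('n::finite \<Rightarrow> 'a) \<Rightarrow> ('n \<Rightarrow> 'a)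
    \<Rightarrow> ('n \<Rightarrow> 'n \<Rightarrow> real) \<Rightarrow> ('n \<Rightarrow> 'n \<Rightarrow> real) \<Rightarrow> ('n \<Rightarrow> 'n \<Rightarrow> real) \<Rightarrow> 'a" where
  "quad_ham sc p q \<mu> \<kappa> \<gamma> =
     (\<Sum>i\<in>UNIV. \<Sum>j\<in>UNIV.
        sc (of_real (\<mu> i j / 2)) * (p i * p j) + sc (of_real (\<kappa> i j / 2)) * (q i * q j)
      + sc (of_real (\<gamma> i j / 2)) * (p i * q j) + sc (of_real (\<gamma> j i / 2)) * (q i * p j))"

definition dirac_form :: "(complex \<Rightarrow> 'a::ring_1) \<Rightarrow> ('a \<Rightarrow> 'a) \<Rightarrow> ('n::finite \<Rightarrow> 'a) \<Rightarrow> ('n \<Rightarrow> 'a)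
    \<Rightarrow> 'a \<Rightarrow> ('n \<Rightarrow> real) \<Rightarrow> real \<Rightarrow> ('n \<Rightarrow> 'a) \<Rightarrow> bool" where
  "dirac_form sc star p q H \<omega> C d \<longleftrightarrow>
     (\<exists>a b :: 'n \<Rightarrow> 'n \<Rightarrow> complex.
        \<forall>i. d i = (\<Sum>k\<in>UNIV. sc (a i k) * p k + sc (b i k) * q k)) \<and>
     (\<forall>i j. comm (d i) (star (d j)) = (if i = j then 1 else 0)) \<and>
     (\<forall>i j. comm (d i) (d j) = 0) \<and>
     H = (\<Sum>i\<in>UNIV. sc (of_real (\<omega> i)) * (star (d i) * d i)) + sc (of_real C)"

definition dirac_diagonalizable :: "(complex \<Rightarrow> 'a::ring_1) \<Rightarrow> ('a \<Rightarrow> 'a) \<Rightarrow> ('n::finite \<Rightarrow> 'a)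
    \<Rightarrow> ('n \<Rightarrow> 'a) \<Rightarrow> 'a \<Rightarrow> bool" where
  "dirac_diagonalizable sc star p q H \<longleftrightarrow> (\<exists>\<omega> C d. dirac_form sc star p q H \<omega> C d)"

end

theory Submission
  imports Defs "HOL-Analysis.Analysis"
begin

text \<open>For complex linear combinations x, y of the p_i and q_i the commutator [x, y] is a
scalar, written \<open>cform x y\<close>; under this form the modes d_i and d_i\<dagger> of a diagonalized
form are dual to each other. Consequently [H, x] = \<Sum>_i \<omega>_i (\<langle>d_i\<dagger>, x\<rangle> d_i + \<langle>d_i, x\<rangle> d_i\<dagger>)
for linear x, and for \<omega> \<noteq> 0 every x = \<Sum> \<alpha>_i d_i over the modes with \<omega>_i = \<omega> satisfies
[H, x] = -\<omega> x. Such an x equals -[H, x]/\<omega>, so it lies in the span of the d'_j and d'_j\<dagger>;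
if it is moreover orthogonal to the d'_j\<dagger> with \<omega>'_j = \<omega>, the eigenvalue equation kills all
its d'_j-components. Then \<langle>x, x\<dagger>\<rangle> equals \<Sum> |\<alpha>_i|^2 \<ge> 0 and also -\<Sum> |\<beta>_j|^2 \<le> 0, forcing
\<alpha> = 0. Hence the frequency \<omega> occurs at most as often in the first form as in the second, and
by symmetry equally often; the multiplicity of 0 then follows by counting.\<close>

lemma card_le_card_if_rows_independent:
  fixes M :: "'i::finite \<Rightarrow> 'j::finite \<Rightarrow> 'k::field" and S :: "'i set" and S' :: "'j set"
  assumes indep: "\<And>\<alpha>. \<forall>i. i \<notin> S \<longrightarrow> \<alpha> i = 0 \<Longrightarrow> \<forall>j\<in>S'. (\<Sum>i\<in>UNIV. \<alpha> i * M i j) = 0 \<Longrightarrow> \<forall>i. \<alpha> i = 0"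
  shows "card S \<le> card S'"
proof -
  define N :: "'k^'i^'j" where "N = (\<chi> j i. if j \<in> S' then M i j else 0)"
  define A where "A = (\<lambda>i. axis i (1::'k)) ` S"
  have span_A: "vec.span A \<subseteq> {x. \<forall>i. i \<notin> S \<longrightarrow> x $ i = 0}"
    by (rule vec.span_minimal) (auto simp: A_def axis_def vec.subspace_def)
  have inj: "inj_on ((*v) N) (vec.span A)"
    unfolding vec.linear_inj_on_iff_eq_0[OF matrix_vector_mul_linear_gen vec.subspace_span]
  proof (intro ballI impI)
    fix x assume "x \<in> vec.span A" "N *v x = 0"
    then have "\<forall>i. i \<notin> S \<longrightarrow> x $ i = 0" using span_A by blast
    moreover have "(\<Sum>i\<in>UNIV. x $ i * M i j) = 0" if "j \<in> S'" for j
      using arg_cong[OF \<open>N *v x = 0\<close>, of "\<lambda>y. y $ j"] that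
      by (simp add: N_def matrix_vector_mult_def mult.commute)
    ultimately have "\<forall>i. x $ i = 0"
      by (intro indep) auto
    then show "x = 0" by (simp add: vec_eq_iff)
  qed
  have "A \<subseteq> cart_basis" by (auto simp: A_def cart_basis_def)
  then have "vec.independent ((*v) N ` A)"
    using vec.linear_independent_injective_image[OF matrix_vector_mul_linear_gen] inj
      vec.independent_mono[OF independent_cart_basis] by blast
  moreover have "(*v) N ` A \<subseteq> vec.span ((\<lambda>j. axis j 1) ` S')"
  proof
    fix y assume "y \<in> (*v) N ` A"
    then obtain i where "y = N *v axis i 1" by (auto simp: A_def)
    then have "y = (\<Sum>j\<in>S'. M i j *s axis j 1)"
      by (simp add: vec_eq_iff N_def matrix_vector_mult_def sum_component axis_def if_distrib cong: if_cong)
    also have "\<dots> \<in> vec.span ((\<lambda>j. axis j 1) ` S')"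
      by (intro vec.span_sum vec.span_scale vec.span_base) auto
    finally show "y \<in> vec.span ((\<lambda>j. axis j 1) ` S')" .
  qed
  ultimately have "card ((*v) N ` A) \<le> card ((\<lambda>j. axis j (1::'k)) ` S')"
    using vec.independent_span_bound[of "(\<lambda>j. axis j (1::'k)) ` S'" "(*v) N ` A"] by simp
  also have "\<dots> \<le> card S'" by (rule card_image_le) simp
  finally have "card ((*v) N ` A) \<le> card S'" .
  moreover have "card ((*v) N ` A) = card A"
    using inj_on_subset[OF inj vec.span_superset] by (rule card_image)
  moreover have "card A = card S"
    unfolding A_def by (rule card_image) (simp add: inj_on_def axis_eq_axis)
  ultimately show ?thesis by simp
qed

locale ccr_algebra =
  fixes sc :: "complex \<Rightarrow> 'a::ring_1" and star :: "'a \<Rightarrow> 'a" and p q :: "'n::finite \<Rightarrow> 'a"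
  assumes star_algebra: "star_algebra sc star" and ccr: "ccr sc star p q"
begin

lemma
  shows nontrivial: "(1::'a) \<noteq> 0"
    and sc_add: "sc (a + b) = sc a + sc b"
    and sc_mult: "sc (a * b) = sc a * sc b"
    and sc_1: "sc 1 = 1"
    and sc_central: "sc a * x = x * sc a"
    and star_add: "star (x + y) = star x + star y"
    and star_mult: "star (x * y) = star y * star x"
    and star_sc: "star (sc a) = sc (cnj a)"
    and star_star: "star (star x) = x"
  using star_algebra unfolding star_algebra_def by blast+

lemma p_hermitian: "star (p i) = p i" and q_hermitian: "star (q i) = q i"
  using ccr by (auto simp: ccr_def)

lemma sc_0: "sc 0 = 0"
  using sc_add[of 0 0] by simp

lemma sc_minus: "sc (- a) = - sc a"
  using sc_add[of a "- a"] sc_0 by (metis neg_eq_iff_add_eq_0 add.right_inverse)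

lemma sc_diff: "sc (a - b) = sc a - sc b"
  using sc_add[of a "- b"] by (simp add: sc_minus)

lemma sc_sum: "sc (\<Sum>i\<in>A. f i) = (\<Sum>i\<in>A. sc (f i))"
  by (induction A rule: infinite_finite_induct) (simp_all add: sc_0 sc_add)

lemma sc_inj: "sc a = sc b \<Longrightarrow> a = b"
proof (rule ccontr)
  assume "sc a = sc b" "a \<noteq> b"
  then have "1 = sc ((a - b) * inverse (a - b))" by (simp add: sc_1)
  also have "\<dots> = 0" using \<open>sc a = sc b\<close> by (simp add: sc_mult sc_diff)
  finally show False using nontrivial by simp
qed

lemma star_0: "star 0 = 0"
  using star_add[of 0 0] by simp

lemma star_minus: "star (- x) = - star x"
  using star_add[of x "- x"] star_0 by (metis neg_eq_iff_add_eq_0 add.right_inverse)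

lemma star_diff: "star (x - y) = star x - star y"
  using star_add[of x "- y"] by (simp add: star_minus)

lemma star_sum: "star (\<Sum>i\<in>A. f i) = (\<Sum>i\<in>A. star (f i))"
  by (induction A rule: infinite_finite_induct) (simp_all add: star_0 star_add)

lemma star_sc_mult: "star (sc a * x) = sc (cnj a) * star x"
  by (simp add: star_mult star_sc sc_central)

lemma comm_add_left: "comm (x + y) z = comm x z + comm y z"
  and comm_add_right: "comm z (x + y) = comm z x + comm z y"
  and comm_mult_left: "comm (x * y) z = x * comm y z + comm x z * y"
  and comm_swap: "comm y x = - comm x y"
  by (simp_all add: comm_def algebra_simps)

lemma comm_sum_left: "comm (\<Sum>i\<in>A. f i) z = (\<Sum>i\<in>A. comm (f i) z)"
  by (induction A rule: infinite_finite_induct) (simp_all add: comm_add_left comm_def[of 0])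

lemma comm_sum_right: "comm z (\<Sum>i\<in>A. f i) = (\<Sum>i\<in>A. comm z (f i))"
  by (induction A rule: infinite_finite_induct) (simp_all add: comm_add_right comm_def[of _ 0])

lemma comm_sc: "comm (sc a) x = 0"
  by (simp add: comm_def sc_central)

lemma comm_sc_mult_left: "comm (sc a * x) y = sc a * comm x y"
  and comm_sc_mult_right: "comm x (sc a * y) = sc a * comm x y"
proof -
  have "y * (sc a * x) = sc a * (y * x)" for x y by (metis mult.assoc sc_central)
  then show "comm (sc a * x) y = sc a * comm x y" "comm x (sc a * y) = sc a * comm x y"
    by (simp_all add: comm_def right_diff_distrib mult.assoc)
qed

definition lincomb :: "'a \<Rightarrow> bool" where
  "lincomb x \<longleftrightarrow> (\<exists>a b. x = (\<Sum>k\<in>UNIV. sc (a k) * p k + sc (b k) * q k))"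

lemma lincomb_0: "lincomb 0"
  unfolding lincomb_def by (rule exI[of _ "\<lambda>_. 0"], rule exI[of _ "\<lambda>_. 0"]) (simp add: sc_0)

lemma lincomb_add: "lincomb x \<Longrightarrow> lincomb y \<Longrightarrow> lincomb (x + y)"
  unfolding lincomb_def
proof (elim exE)
  fix a b a' b'
  assume "x = (\<Sum>k\<in>UNIV. sc (a k) * p k + sc (b k) * q k)"
    and "y = (\<Sum>k\<in>UNIV. sc (a' k) * p k + sc (b' k) * q k)"
  then have "x + y = (\<Sum>k\<in>UNIV. sc (a k + a' k) * p k + sc (b k + b' k) * q k)"
    by (simp add: sum.distrib[symmetric] sc_add algebra_simps)
  then show "\<exists>a b. x + y = (\<Sum>k\<in>UNIV. sc (a k) * p k + sc (b k) * q k)"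
    by (intro exI, assumption)
qed

lemma lincomb_sum: "(\<And>i. i \<in> A \<Longrightarrow> lincomb (f i)) \<Longrightarrow> lincomb (\<Sum>i\<in>A. f i)"
  by (induction A rule: infinite_finite_induct) (auto simp: lincomb_0 lincomb_add)

lemma lincomb_sc_mult: "lincomb x \<Longrightarrow> lincomb (sc c * x)"
  unfolding lincomb_def
proof (elim exE)
  fix a b assume "x = (\<Sum>k\<in>UNIV. sc (a k) * p k + sc (b k) * q k)"
  then have "sc c * x = (\<Sum>k\<in>UNIV. sc (c * a k) * p k + sc (c * b k) * q k)"
    by (simp add: sum_distrib_left sc_mult algebra_simps)
  then show "\<exists>a b. sc c * x = (\<Sum>k\<in>UNIV. sc (a k) * p k + sc (b k) * q k)"
    by (intro exI, assumption)
qed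

lemma lincomb_star: "lincomb x \<Longrightarrow> lincomb (star x)"
  unfolding lincomb_def
proof (elim exE)
  fix a b assume "x = (\<Sum>k\<in>UNIV. sc (a k) * p k + sc (b k) * q k)"
  then have "star x = (\<Sum>k\<in>UNIV. sc (cnj (a k)) * p k + sc (cnj (b k)) * q k)"
    by (simp add: star_sum star_add star_sc_mult p_hermitian q_hermitian)
  then show "\<exists>a b. star x = (\<Sum>k\<in>UNIV. sc (a k) * p k + sc (b k) * q k)"
    by (intro exI, assumption)
qed

lemma scalars_closed:
  shows "0 \<in> range sc"
    and "x \<in> range sc \<Longrightarrow> - x \<in> range sc"
    and "x \<in> range sc \<Longrightarrow> y \<in> range sc \<Longrightarrow> x + y \<in> range sc"
    and "x \<in> range sc \<Longrightarrow> y \<in> range sc \<Longrightarrow> x * y \<in> range sc"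
  using rangeI[of sc 0] by (auto simp: sc_0 simp flip: sc_minus sc_add sc_mult)

lemma scalars_sum: "(\<And>i. i \<in> A \<Longrightarrow> f i \<in> range sc) \<Longrightarrow> (\<Sum>i\<in>A. f i) \<in> range sc"
  by (induction A rule: infinite_finite_induct) (auto intro: scalars_closed)

lemma comm_generators_scalar:
  "comm (p i) (p j) \<in> range sc" "comm (q i) (q j) \<in> range sc"
  "comm (p i) (q j) \<in> range sc" "comm (q i) (p j) \<in> range sc"
  using ccr unfolding ccr_def by (auto simp: comm_swap[of "q i"] intro: scalars_closed)

lemma comm_lincomb_scalar: "lincomb x \<Longrightarrow> lincomb y \<Longrightarrow> comm x y \<in> range sc"
  unfolding lincomb_def
  by (auto simp: comm_sum_left comm_sum_right comm_add_left comm_add_right comm_sc_mult_left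
      comm_sc_mult_right intro!: scalars_sum scalars_closed(3,4) comm_generators_scalar)

text \<open>Only meaningful when both arguments are \<open>lincomb\<close>; otherwise \<open>SOME\<close> picks an arbitrary value.\<close>
definition cform :: "'a \<Rightarrow> 'a \<Rightarrow> complex" where
  "cform x y = (SOME z. comm x y = sc z)"

lemma comm_eq_cform: "lincomb x \<Longrightarrow> lincomb y \<Longrightarrow> comm x y = sc (cform x y)"
  unfolding cform_def using comm_lincomb_scalar[of x y] by (auto intro: someI)

lemma cform_eqI: "lincomb x \<Longrightarrow> lincomb y \<Longrightarrow> comm x y = sc z \<Longrightarrow> cform x y = z"
  using comm_eq_cform sc_inj by metis

lemma cform_add_left: "lincomb x \<Longrightarrow> lincomb y \<Longrightarrow> lincomb z \<Longrightarrow> cform (x + y) z = cform x z + cform y z"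
  by (intro cform_eqI lincomb_add) (auto simp: comm_add_left comm_eq_cform sc_add)

lemma cform_add_right: "lincomb x \<Longrightarrow> lincomb y \<Longrightarrow> lincomb z \<Longrightarrow> cform z (x + y) = cform z x + cform z y"
  by (intro cform_eqI lincomb_add) (auto simp: comm_add_right comm_eq_cform sc_add)

lemma cform_sc_mult_left: "lincomb x \<Longrightarrow> lincomb y \<Longrightarrow> cform (sc c * x) y = c * cform x y"
  by (intro cform_eqI lincomb_sc_mult) (auto simp: comm_sc_mult_left comm_eq_cform sc_mult)

lemma cform_sc_mult_right: "lincomb x \<Longrightarrow> lincomb y \<Longrightarrow> cform x (sc c * y) = c * cform x y"
  by (intro cform_eqI lincomb_sc_mult) (auto simp: comm_sc_mult_right comm_eq_cform sc_mult)

lemma cform_sum_left: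
  "(\<And>i. i \<in> A \<Longrightarrow> lincomb (f i)) \<Longrightarrow> lincomb z \<Longrightarrow> cform (\<Sum>i\<in>A. f i) z = (\<Sum>i\<in>A. cform (f i) z)"
  by (intro cform_eqI lincomb_sum) (auto simp: comm_sum_left comm_eq_cform sc_sum)

lemma cform_sum_right:
  "(\<And>i. i \<in> A \<Longrightarrow> lincomb (f i)) \<Longrightarrow> lincomb z \<Longrightarrow> cform z (\<Sum>i\<in>A. f i) = (\<Sum>i\<in>A. cform z (f i))"
  by (intro cform_eqI lincomb_sum) (auto simp: comm_sum_right comm_eq_cform sc_sum)

lemma cform_swap: "lincomb x \<Longrightarrow> lincomb y \<Longrightarrow> cform y x = - cform x y"
  by (intro cform_eqI) (auto simp: comm_swap[of y] comm_eq_cform sc_minus)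

lemma cform_star: "lincomb x \<Longrightarrow> lincomb y \<Longrightarrow> cform (star x) (star y) = - cnj (cform x y)"
proof (intro cform_eqI lincomb_star)
  assume "lincomb x" "lincomb y"
  have "comm (star x) (star y) = star (comm y x)"
    by (simp add: comm_def star_diff star_mult)
  also have "\<dots> = sc (- cnj (cform x y))"
    using \<open>lincomb x\<close> \<open>lincomb y\<close> by (simp add: comm_eq_cform star_sc cform_swap[of x y])
  finally show "comm (star x) (star y) = sc (- cnj (cform x y))" .
qed

definition dirac_modes :: "('n \<Rightarrow> 'a) \<Rightarrow> bool" where
  "dirac_modes d \<longleftrightarrow> (\<forall>i. lincomb (d i)) \<and>
     (\<forall>i j. cform (d i) (star (d j)) = (if i = j then 1 else 0)) \<and> (\<forall>i j. cform (d i) (d j) = 0)"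

lemma dirac_form_modes:
  assumes "dirac_form sc star p q H \<omega> C d"
  shows "dirac_modes d"
proof -
  have lin: "lincomb (d i)" for i
    using assms unfolding dirac_form_def lincomb_def by blast
  show ?thesis
    unfolding dirac_modes_def
  proof (intro conjI allI)
    fix i j
    show "lincomb (d i)" by (rule lin)
    show "cform (d i) (star (d j)) = (if i = j then 1 else 0)"
      using assms lin by (intro cform_eqI lincomb_star) (auto simp: dirac_form_def sc_1 sc_0)
    show "cform (d i) (d j) = 0"
      using assms lin by (intro cform_eqI) (auto simp: dirac_form_def sc_0)
  qed
qed

definition mode_sum :: "('n \<Rightarrow> 'a) \<Rightarrow> ('n \<Rightarrow> complex) \<Rightarrow> ('n \<Rightarrow> complex) \<Rightarrow> 'a" where
  "mode_sum d \<alpha> \<beta> = (\<Sum>i\<in>UNIV. sc (\<alpha> i) * d i + sc (\<beta> i) * star (d i))"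

context
  fixes d assumes modes: "dirac_modes d"
begin

lemma lincomb_mode: "lincomb (d i)" "lincomb (star (d i))"
  using modes lincomb_star by (auto simp: dirac_modes_def)

lemma lincomb_mode_sum: "lincomb (mode_sum d \<alpha> \<beta>)"
  unfolding mode_sum_def by (intro lincomb_sum lincomb_add lincomb_sc_mult lincomb_mode)

lemma cform_modes:
  "cform (d i) (star (d j)) = (if i = j then 1 else 0)" "cform (d i) (d j) = 0"
  "cform (star (d i)) (star (d j)) = 0" "cform (star (d i)) (d j) = (if i = j then -1 else 0)"
  using modes cform_star[OF lincomb_mode(1) lincomb_mode(1), of i j]
    cform_swap[OF lincomb_mode(1)[of j] lincomb_mode(2)[of i]]
  by (auto simp: dirac_modes_def)

lemma cform_mode_sum_star_mode: "cform (mode_sum d \<alpha> \<beta>) (star (d j)) = \<alpha> j"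
  unfolding mode_sum_def
  by (simp add: cform_sum_left cform_add_left cform_sc_mult_left lincomb_mode lincomb_add
      lincomb_sc_mult cform_modes if_distrib[of "times _"] cong: if_cong)

lemma cform_mode_sum_mode: "cform (mode_sum d \<alpha> \<beta>) (d j) = - \<beta> j"
  unfolding mode_sum_def
  by (simp add: cform_sum_left cform_add_left cform_sc_mult_left lincomb_mode lincomb_add
      lincomb_sc_mult cform_modes if_distrib[of "times _"] cong: if_cong)

lemma star_mode_sum: "star (mode_sum d \<alpha> \<beta>) = mode_sum d (\<lambda>i. cnj (\<beta> i)) (\<lambda>i. cnj (\<alpha> i))"
  unfolding mode_sum_def by (simp add: star_sum star_add star_sc_mult star_star add.commute)

lemma sc_mult_mode_sum: "sc c * mode_sum d \<alpha> \<beta> = mode_sum d (\<lambda>i. c * \<alpha> i) (\<lambda>i. c * \<beta> i)"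
  unfolding mode_sum_def by (simp add: sum_distrib_left sc_mult algebra_simps)

lemma cform_mode_sum_star:
  "cform (mode_sum d \<alpha> \<beta>) (star (mode_sum d \<alpha> \<beta>)) =
     of_real ((\<Sum>i\<in>UNIV. (cmod (\<alpha> i))\<^sup>2) - (\<Sum>i\<in>UNIV. (cmod (\<beta> i))\<^sup>2))"
proof -
  let ?x = "mode_sum d \<alpha> \<beta>"
  have "cform ?x (star ?x) = (\<Sum>i\<in>UNIV. cnj (\<beta> i) * cform ?x (d i) + cnj (\<alpha> i) * cform ?x (star (d i)))"
    unfolding star_mode_sum by (subst (2) mode_sum_def)
      (simp add: cform_sum_right cform_add_right cform_sc_mult_right lincomb_mode lincomb_mode_sum
        lincomb_add lincomb_sc_mult)
  also have "\<dots> = (\<Sum>i\<in>UNIV. \<alpha> i * cnj (\<alpha> i) - \<beta> i * cnj (\<beta> i))"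
    by (simp add: cform_mode_sum_mode cform_mode_sum_star_mode algebra_simps)
  finally show ?thesis by (simp add: sum_subtractf flip: complex_norm_square)
qed

end

lemma comm_dirac_form:
  assumes "dirac_form sc star p q H \<omega> C d" and "lincomb x"
  shows "comm H x = mode_sum d (\<lambda>i. of_real (\<omega> i) * cform (star (d i)) x) (\<lambda>i. of_real (\<omega> i) * cform (d i) x)"
proof -
  have modes: "dirac_modes d" using assms(1) by (rule dirac_form_modes)
  have H: "H = (\<Sum>i\<in>UNIV. sc (of_real (\<omega> i)) * (star (d i) * d i)) + sc (of_real C)"
    using assms(1) by (simp add: dirac_form_def)
  have "comm (sc (of_real (\<omega> i)) * (star (d i) * d i)) x =
      sc (of_real (\<omega> i) * cform (star (d i)) x) * d i + sc (of_real (\<omega> i) * cform (d i) x) * star (d i)"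
    for i
  proof -
    have "comm (sc (of_real (\<omega> i)) * (star (d i) * d i)) x =
        sc (of_real (\<omega> i)) * (star (d i) * sc (cform (d i) x) + sc (cform (star (d i)) x) * d i)"
      using assms(2) lincomb_mode[OF modes]
      by (simp add: comm_sc_mult_left comm_mult_left comm_eq_cform comm_sc)
    also have "\<dots> = sc (of_real (\<omega> i)) * sc (cform (d i) x) * star (d i)
        + sc (of_real (\<omega> i)) * sc (cform (star (d i)) x) * d i"
      by (simp add: distrib_left sc_central[of _ "star (d i)"] mult.assoc)
    finally show ?thesis by (simp add: sc_mult add.commute)
  qed
  then show ?thesis
    unfolding H mode_sum_def comm_add_left comm_sum_left comm_sc by simp
qed

lemma comm_dirac_form_annihilator:
  assumes "dirac_form sc star p q H \<omega> C d" and "\<And>i. \<alpha> i \<noteq> 0 \<Longrightarrow> \<omega> i = w"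
  shows "comm H (mode_sum d \<alpha> (\<lambda>_. 0)) = sc (- of_real w) * mode_sum d \<alpha> (\<lambda>_. 0)"
proof -
  let ?x = "mode_sum d \<alpha> (\<lambda>_. 0)"
  have modes: "dirac_modes d" using assms(1) by (rule dirac_form_modes)
  have "cform (star (d i)) ?x = - \<alpha> i" "cform (d i) ?x = 0" for i
    using cform_swap[OF lincomb_mode_sum[OF modes] lincomb_mode(1)[OF modes]]
      cform_swap[OF lincomb_mode_sum[OF modes] lincomb_mode(2)[OF modes]]
      cform_mode_sum_star_mode[OF modes] cform_mode_sum_mode[OF modes] by simp_all
  then have "comm H ?x = mode_sum d (\<lambda>i. of_real (\<omega> i) * - \<alpha> i) (\<lambda>i. of_real (\<omega> i) * 0)"
    by (simp add: comm_dirac_form[OF assms(1) lincomb_mode_sum[OF modes]])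
  also have "\<dots> = mode_sum d (\<lambda>i. - of_real w * \<alpha> i) (\<lambda>i. - of_real w * 0)"
    using assms(2) by (intro arg_cong2[where f = "mode_sum d"]) (auto simp: fun_eq_iff)
  also have "\<dots> = sc (- of_real w) * ?x"
    by (rule sc_mult_mode_sum[OF modes, symmetric])
  finally show ?thesis .
qed

lemma eigen_creation_combination:
  assumes D: "dirac_form sc star p q H \<omega> C d" and "lincomb x" and "w \<noteq> 0"
    and eigen: "comm H x = sc (- of_real w) * x"
    and orth: "\<And>j. \<omega> j = w \<Longrightarrow> cform x (star (d j)) = 0"
  shows "\<exists>\<beta>. x = mode_sum d (\<lambda>_. 0) \<beta>"
proof -
  have modes: "dirac_modes d" using D by (rule dirac_form_modes)
  define \<alpha> where "\<alpha> k = - 1 / of_real w * (of_real (\<omega> k) * cform (star (d k)) x)" for k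
  define \<beta> where "\<beta> k = - 1 / of_real w * (of_real (\<omega> k) * cform (d k) x)" for k
  have "x = sc (- 1 / of_real w) * comm H x"
    using \<open>w \<noteq> 0\<close> by (simp add: eigen mult.assoc[symmetric] sc_1 flip: sc_mult)
  also have "\<dots> = mode_sum d \<alpha> \<beta>"
    unfolding comm_dirac_form[OF D \<open>lincomb x\<close>] sc_mult_mode_sum[OF modes] \<alpha>_def \<beta>_def ..
  finally have x: "x = mode_sum d \<alpha> \<beta>" .
  have "\<alpha> k = 0" for k
  proof -
    have \<alpha>k: "cform x (star (d k)) = \<alpha> k"
      using x cform_mode_sum_star_mode[OF modes] by metis
    show ?thesis
    proof (cases "\<omega> k = w")
      case True
      then show ?thesis using \<alpha>k orth by simp
    next
      case False
      have "cform (star (d k)) x = - \<alpha> k"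
        using \<alpha>k cform_swap[OF \<open>lincomb x\<close> lincomb_mode(2)[OF modes, of k]] by simp
      then have "\<alpha> k = of_real (\<omega> k) * \<alpha> k / of_real w"
        by (subst \<alpha>_def) simp
      then have "\<alpha> k * (of_real w - of_real (\<omega> k)) = 0"
        using \<open>w \<noteq> 0\<close> by (simp add: field_simps)
      then show ?thesis using False by simp
    qed
  qed
  then have "\<alpha> = (\<lambda>_. 0)" by auto
  then show ?thesis using x by blast
qed

lemma card_frequency_le:
  assumes D: "dirac_form sc star p q H \<omega> C d" and D': "dirac_form sc star p q H \<omega>' C' d'"
    and "w \<noteq> 0"
  shows "card {i. \<omega> i = w} \<le> card {i. \<omega>' i = w}"
proof (rule card_le_card_if_rows_independent[where M = "\<lambda>i j. cform (d i) (star (d' j))"])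
  fix \<alpha> :: "'n \<Rightarrow> complex"
  assume supp: "\<forall>i. i \<notin> {i. \<omega> i = w} \<longrightarrow> \<alpha> i = 0"
    and orth: "\<forall>j\<in>{i. \<omega>' i = w}. (\<Sum>i\<in>UNIV. \<alpha> i * cform (d i) (star (d' j))) = 0"
  have modes: "dirac_modes d" and modes': "dirac_modes d'"
    using D D' by (simp_all add: dirac_form_modes)
  define x where "x = mode_sum d \<alpha> (\<lambda>_. 0)"
  have "lincomb x" unfolding x_def by (rule lincomb_mode_sum[OF modes])
  have coeff: "cform x (star (d' j)) = (\<Sum>i\<in>UNIV. \<alpha> i * cform (d i) (star (d' j)))" for j
    unfolding x_def mode_sum_def
    by (simp add: cform_sum_left cform_add_left cform_sc_mult_left lincomb_mode[OF modes]
        lincomb_mode[OF modes'] lincomb_add lincomb_sc_mult)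
  have "comm H x = sc (- of_real w) * x"
    unfolding x_def using supp by (intro comm_dirac_form_annihilator[OF D]) auto
  moreover have "cform x (star (d' j)) = 0" if "\<omega>' j = w" for j
    using coeff orth that by simp
  ultimately obtain \<beta> where \<beta>: "x = mode_sum d' (\<lambda>_. 0) \<beta>"
    using eigen_creation_combination[OF D' \<open>lincomb x\<close> \<open>w \<noteq> 0\<close>] by blast
  have "cform x (star x) = of_real (\<Sum>i\<in>UNIV. (cmod (\<alpha> i))\<^sup>2)"
    using cform_mode_sum_star[OF modes, of \<alpha> "\<lambda>_. 0"] by (simp add: x_def)
  moreover have "cform x (star x) = of_real (- (\<Sum>i\<in>UNIV. (cmod (\<beta> i))\<^sup>2))"
    using cform_mode_sum_star[OF modes', of "\<lambda>_. 0" \<beta>] by (simp add: \<beta>)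
  ultimately have "(\<Sum>i\<in>UNIV. (cmod (\<alpha> i))\<^sup>2) = - (\<Sum>i\<in>UNIV. (cmod (\<beta> i))\<^sup>2)"
    using of_real_eq_iff by metis
  then have "(\<Sum>i\<in>UNIV. (cmod (\<alpha> i))\<^sup>2) = 0"
    using sum_nonneg[of UNIV "\<lambda>i. (cmod (\<alpha> i))\<^sup>2"] sum_nonneg[of UNIV "\<lambda>i. (cmod (\<beta> i))\<^sup>2"]
    by simp
  then show "\<forall>i. \<alpha> i = 0"
    by (simp add: sum_nonneg_eq_0_iff)
qed

end

lemma multiset_eq_if_size_eq_and_counts_eq_except:
  assumes "size M = size N" and "\<And>x. x \<noteq> z \<Longrightarrow> count M x = count N x"
  shows "M = N"
proof -
  have filter_eq: "{#x \<in># M. x \<noteq> z#} = {#x \<in># N. x \<noteq> z#}"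
    by (rule multiset_eqI) (simp add: assms(2))
  have "size K = size {#x \<in># K. x \<noteq> z#} + count K z" for K :: "'a multiset"
    by (subst multiset_partition[of K "\<lambda>x. x \<noteq> z"]) (simp add: filter_eq_replicate_mset)
  then have "count M z = count N z"
    using assms(1) filter_eq by (metis add_left_cancel)
  then show ?thesis
    using assms(2) by (metis multiset_eqI)
qed

theorem theorem6:
  fixes sc :: "complex \<Rightarrow> 'a::ring_1" and star :: "'a \<Rightarrow> 'a"
    and p q :: "'n::finite \<Rightarrow> 'a"
    and \<mu> \<kappa> \<gamma> :: "'n \<Rightarrow> 'n \<Rightarrow> real"
    and \<omega> \<omega>' :: "'n \<Rightarrow> real" and C C' :: real and d d' :: "'n \<Rightarrow> 'a"
  assumes "star_algebra sc star"
    and "ccr sc star p q"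
    and "\<And>i j. \<mu> i j = \<mu> j i"
    and "\<And>i j. \<kappa> i j = \<kappa> j i"
    and "dirac_diagonalizable sc star p q (quad_ham sc p q \<mu> \<kappa> \<gamma>)"
    and "dirac_form sc star p q (quad_ham sc p q \<mu> \<kappa> \<gamma>) \<omega> C d"
    and "dirac_form sc star p q (quad_ham sc p q \<mu> \<kappa> \<gamma>) \<omega>' C' d'"
  shows "image_mset \<omega> (mset_set UNIV) = image_mset \<omega>' (mset_set UNIV)"
proof (rule multiset_eq_if_size_eq_and_counts_eq_except[where z = 0])
  interpret ccr_algebra sc star p q using assms(1,2) by unfold_locales
  fix w :: real assume "w \<noteq> 0"
  then have "card {i. \<omega> i = w} = card {i. \<omega>' i = w}"
    using card_frequency_le[OF assms(6,7)] card_frequency_le[OF assms(7,6)] by (simp add: antisym)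
  then show "count (image_mset \<omega> (mset_set UNIV)) w = count (image_mset \<omega>' (mset_set UNIV)) w"
    by (simp add: count_image_mset' eq_commute)
qed simp

end
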